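(* Let $q\ge2$, let $n_i\to\infty$, let $(R_i)$ be reals with $R_i\to\infty$, and let $(l_i)$ be positive integers such that $l_i\le\beta n_i$ for all $i$, for some constant $\beta>0$. For each $i$ let $\mathcal C_i$ be an $l_i$-shot ID code for $\Pi^q_{n_i}$ with $M_i\ge 2^{R_i n_i^{l_i(q-1)}}$ messages and type-I and type-II error probabilities $\lambda_{1,i},\lambda_{2,i}$. Then $\liminf_{i\to\infty}(\lambda_{1,i}+\lambda_{2,i})\ge1$.
   Context: Fix an integer $q\ge 2$ and let $\mathcal A_q=\{1,\dots,q\}$. For $n\ge1$ and $\sigma\in S_n$ (the symmetric group on $\{1,\dots,n\}$), $\sigma\mathbf x=(x_{\sigma^{-1}(1)},\dots,x_{\sigma^{-1}(n)})$ for $\mathbf x\in\mathcal A_q^n$. The $n$-block $q$-ary uniform permutation channel $\Pi^q_n$ has input/output alphabet $\mathcal A_q^n$ and $\Pi^q_n(\mathbf y\mid\mathbf x)=\frac1{n!}\sum_{\sigma\in S_n}\mathbf 1\{\mathbf y=\sigma\mathbf x\}$. Using it $l$ times (independently on each block) gives the channel $W^{(l)}$ on $(\mathcal A_q^n)^l$ with $W^{(l)}(\mathbf y^{(1)},\dots,\mathbf y^{(l)}\mid \mathbf x^{(1)},\dots,\mathbf x^{(l)})=\prod_{s=1}^l\Pi^q_n(\mathbf y^{(s)}\mid\mathbf x^{(s)})$. An $l$-shot ID code with $M$ messages for $\Pi^q_n$ (an "$(n,l,M,\lambda_1,\lambda_2)$ ID code") is a family $\{(Q_i,\mathcal D_i)\}_{i=1}^M$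 with $Q_i$ a probability distribution on $(\mathcal A_q^n)^l$ and $\mathcal D_i\subseteq(\mathcal A_q^n)^l$; its error probabilities are $\lambda_{i\to j}=\sum_{\underline{\mathbf x}}Q_i(\underline{\mathbf x})\sum_{\underline{\mathbf y}\in\mathcal D_j}W^{(l)}(\underline{\mathbf y}\mid\underline{\mathbf x})$ ($i\neq j$), $\lambda_{i\not\to i}=\sum_{\underline{\mathbf x}}Q_i(\underline{\mathbf x})\sum_{\underline{\mathbf y}\notin\mathcal D_i}W^{(l)}(\underline{\mathbf y}\mid\underline{\mathbf x})$, type-I error probability $\lambda_1=\max_i\lambda_{i\not\to i}$, type-II error probability $\lambda_2=\max_{i\ne j}\lambda_{i\to j}$. *)

theory Defs
  imports "HOL-Probability.Probability" "HOL-Combinatorics.Permutations"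
begin

definition words :: "nat \<Rightarrow> nat \<Rightarrow> nat list set" where
  "words q n = {x. length x = n \<and> set x \<subseteq> {1..q}}"

definition blocks :: "nat \<Rightarrow> nat \<Rightarrow> nat \<Rightarrow> nat list list set" where
  "blocks q n l = {xs. length xs = l \<and> (\<forall>s<l. xs ! s \<in> words q n)}"

definition perm_act :: "(nat \<Rightarrow> nat) \<Rightarrow> nat list \<Rightarrow> nat list" where
  "perm_act \<sigma> x = permute_list (inv \<sigma>) x"

definition perm_channel :: "nat \<Rightarrow> nat list \<Rightarrow> nat list \<Rightarrow> real" where
  "perm_channel n y x =
     (\<Sum>\<sigma>\<in>{\<sigma>. \<sigma> permutes {..<n}}. if y = perm_act \<sigma> x then 1 else 0) / fact n"

definition W_l :: "nat \<Rightarrow> nat \<Rightarrow> nat list list \<Rightarrow> nat list list \<Rightarrow> real" where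
  "W_l n l ys xs = (\<Prod>s<l. perm_channel n (ys ! s) (xs ! s))"

definition is_ID_code :: "nat \<Rightarrow> nat \<Rightarrow> nat \<Rightarrow> nat \<Rightarrow>
    (nat \<Rightarrow> nat list list pmf) \<Rightarrow> (nat \<Rightarrow> nat list list set) \<Rightarrow> bool" where
  "is_ID_code q n l M Q D \<longleftrightarrow>
     (\<forall>i<M. set_pmf (Q i) \<subseteq> blocks q n l \<and> D i \<subseteq> blocks q n l)"

definition err_to :: "nat \<Rightarrow> nat \<Rightarrow> nat \<Rightarrow>
    (nat \<Rightarrow> nat list list pmf) \<Rightarrow> (nat \<Rightarrow> nat list list set) \<Rightarrow> nat \<Rightarrow> nat \<Rightarrow> real" where
  "err_to q n l Q D i j =
     measure_pmf.expectation (Q i) (\<lambda>xs. \<Sum>ys\<in>D j. W_l n l ys xs)"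

definition err_miss :: "nat \<Rightarrow> nat \<Rightarrow> nat \<Rightarrow>
    (nat \<Rightarrow> nat list list pmf) \<Rightarrow> (nat \<Rightarrow> nat list list set) \<Rightarrow> nat \<Rightarrow> real" where
  "err_miss q n l Q D i =
     measure_pmf.expectation (Q i) (\<lambda>xs. \<Sum>ys\<in>blocks q n l - D i. W_l n l ys xs)"

(* type-I error: max_i lambda_{i -/-> i}  (errors are nonnegative; 0 is inserted only
   to make the maximum well defined in degenerate cases) *)
definition lambda1 :: "nat \<Rightarrow> nat \<Rightarrow> nat \<Rightarrow> nat \<Rightarrow>
    (nat \<Rightarrow> nat list list pmf) \<Rightarrow> (nat \<Rightarrow> nat list list set) \<Rightarrow> real" where
  "lambda1 q n l M Q D = Max (insert 0 {err_miss q n l Q D i | i. i < M})"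

definition lambda2 :: "nat \<Rightarrow> nat \<Rightarrow> nat \<Rightarrow> nat \<Rightarrow>
    (nat \<Rightarrow> nat list list pmf) \<Rightarrow> (nat \<Rightarrow> nat list list set) \<Rightarrow> real" where
  "lambda2 q n l M Q D =
     Max (insert 0 {err_to q n l Q D i j | i j. i < M \<and> j < M \<and> i \<noteq> j})"

end

theory Submission
  imports Defs
begin

text \<open>The output law of the permutation channel depends on an input word only through its type
  (the multiset of its letters), and there are at most \<open>N = (n+1)^(l(q-1))\<close> types of
  \<open>l\<close>-tuples of words. So an ID code is really a code for a channel with \<open>N\<close> inputs.
  Rounding each induced input distribution down to the grid \<open>1/K\<close> gives a multiset of size
  at most \<open>K\<close> over the types, and there are at most \<open>2^(N+2K)\<close> of these. Once
  \<open>M > 2^(N+2K)\<close> two messages \<open>i \<noteq> j\<close> share a rounding; then their input laws differ by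
  at most \<open>1/K\<close> at every type, and the test \<open>D i\<close> cannot separate them:
  \<open>\<lambda>\<^sub>1 + \<lambda>\<^sub>2 \<ge> 1 - N/K\<close>. With \<open>K \<approx> N/\<epsilon>\<close> and
  \<open>N \<le> e^(\<beta>(q-1)) n^(l(q-1))\<close> (as \<open>l \<le> \<beta>n\<close>), the size condition
  \<open>M \<ge> 2^(R n^(l(q-1)))\<close> holds as soon as \<open>R\<close> exceeds a constant depending on \<open>\<epsilon>\<close>.\<close>

lemma perm_act_permute_list:
  assumes "p permutes {..<length x}" "\<sigma> permutes {..<length x}"
  shows "perm_act \<sigma> (permute_list p x) = perm_act (\<sigma> \<circ> inv p) x"
proof -
  have bs: "bij \<sigma>" "bij p" using assms permutes_bij by auto
  have "inv (\<sigma> \<circ> inv p) = p \<circ> inv \<sigma>"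
    using bs by (simp add: o_inv_distrib bij_imp_bij_inv inv_inv_eq)
  moreover have "permute_list (inv \<sigma>) (permute_list p x) = permute_list (p \<circ> inv \<sigma>) x"
    using permute_list_compose[of "inv \<sigma>" x p] permutes_inv[OF assms(2)] by simp
  ultimately show ?thesis unfolding perm_act_def by simp
qed

lemma perm_channel_cong_mset:
  assumes "length x = n" "mset x' = mset x"
  shows "perm_channel n y x' = perm_channel n y x"
proof -
  obtain p where p: "p permutes {..<length x}" "permute_list p x = x'"
    using mset_eq_permutation[OF assms(2)] by metis
  let ?P = "{\<sigma>. \<sigma> permutes {..<n}}"
  have bij: "bij_betw (\<lambda>\<sigma>. \<sigma> \<circ> inv p) ?P ?P"
  proof (rule bij_betw_byWitness[where f' = "\<lambda>\<sigma>. \<sigma> \<circ> p"])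
    show "\<forall>a\<in>?P. a \<circ> inv p \<circ> p = a" "\<forall>a\<in>?P. a \<circ> p \<circ> inv p = a"
      using p assms(1) by (auto simp: o_assoc[symmetric] permutes_inv_o)
    show "(\<lambda>\<sigma>. \<sigma> \<circ> inv p) ` ?P \<subseteq> ?P" "(\<lambda>\<sigma>. \<sigma> \<circ> p) ` ?P \<subseteq> ?P"
      using p assms(1) by (auto intro: permutes_compose permutes_inv)
  qed
  have "(\<Sum>\<sigma>\<in>?P. if y = perm_act \<sigma> x' then 1 else 0 :: real)
      = (\<Sum>\<sigma>\<in>?P. if y = perm_act (\<sigma> \<circ> inv p) x then 1 else 0)"
    using p assms(1) by (intro sum.cong) (auto simp: perm_act_permute_list)
  also have "\<dots> = (\<Sum>\<sigma>\<in>?P. if y = perm_act \<sigma> x then 1 else 0)"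
    using sum.reindex_bij_betw[OF bij, of "\<lambda>\<sigma>. if y = perm_act \<sigma> x then 1 else (0::real)"] .
  finally show ?thesis unfolding perm_channel_def by simp
qed

lemma perm_channel_nonneg: "perm_channel n y x \<ge> 0"
  unfolding perm_channel_def by (auto intro!: sum_nonneg divide_nonneg_nonneg)

lemma finite_words: "finite (words q n)"
proof -
  have "words q n = {x. set x \<subseteq> {1..q} \<and> length x = n}" unfolding words_def by auto
  then show ?thesis using finite_lists_length_eq[of "{1..q}" n] by simp
qed

lemma sum_perm_channel_words:
  assumes "x \<in> words q n"
  shows "(\<Sum>y\<in>words q n. perm_channel n y x) = 1"
proof -
  let ?P = "{\<sigma>. \<sigma> permutes {..<n}}"
  have len: "length x = n" using assms by (auto simp: words_def)
  have perm_act_in_words: "perm_act \<sigma> x \<in> words q n" if "\<sigma> \<in> ?P" for \<sigma>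
  proof -
    have "inv \<sigma> permutes {..<length x}" using that len permutes_inv by auto
    then show ?thesis using assms unfolding perm_act_def words_def by auto
  qed
  have "(\<Sum>y\<in>words q n. perm_channel n y x)
     = (\<Sum>\<sigma>\<in>?P. \<Sum>y\<in>words q n. if y = perm_act \<sigma> x then 1 else 0) / fact n"
    unfolding perm_channel_def sum_divide_distrib[symmetric] by (subst sum.swap) simp
  also have "\<dots> = (\<Sum>\<sigma>\<in>?P. 1::real) / fact n"
    using perm_act_in_words finite_words[of q n]
    by (intro arg_cong2[where f="(/)"] sum.cong refl) (auto simp: sum.delta)
  also have "\<dots> = 1" using card_permutations[of "{..<n}" n] by simp
  finally show ?thesis .
qed

lemma sum_lists_length_prod_nth:
  fixes f :: "nat \<Rightarrow> 'a \<Rightarrow> real"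
  assumes "finite A"
  shows "(\<Sum>ys\<in>{ys. length ys = l \<and> (\<forall>s<l. ys!s \<in> A)}. \<Prod>s<l. f s (ys!s)) = (\<Prod>s<l. \<Sum>y\<in>A. f s y)"
proof -
  let ?B = "{ys. length ys = l \<and> (\<forall>s<l. ys!s \<in> A)}"
  let ?P = "PiE {..<l} (\<lambda>_. A)"
  have bij: "bij_betw (\<lambda>g. map g [0..<l]) ?P ?B"
  proof (rule bij_betw_byWitness[where f' = "\<lambda>ys. restrict (nth ys) {..<l}"])
    show "\<forall>a\<in>?P. restrict (nth (map a [0..<l])) {..<l} = a"
    proof
      fix a assume a: "a \<in> ?P"
      show "restrict (nth (map a [0..<l])) {..<l} = a"
      proof (rule ext)
        fix x show "restrict (nth (map a [0..<l])) {..<l} x = a x"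
          using PiE_arb[OF a, of x] by (cases "x < l") auto
      qed
    qed
    show "\<forall>a\<in>?B. map (restrict (nth a) {..<l}) [0..<l] = a"
      by (auto intro!: nth_equalityI)
    show "(\<lambda>g. map g [0..<l]) ` ?P \<subseteq> ?B"
    proof
      fix ys assume "ys \<in> (\<lambda>g. map g [0..<l]) ` ?P"
      then obtain g where g: "g \<in> ?P" "ys = map g [0..<l]" by blast
      then show "ys \<in> ?B" using PiE_mem[OF g(1)] by auto
    qed
    show "(\<lambda>ys. restrict (nth ys) {..<l}) ` ?B \<subseteq> ?P"
    proof
      fix h assume "h \<in> (\<lambda>ys. restrict (nth ys) {..<l}) ` ?B"
      then obtain ys where ys: "ys \<in> ?B" "h = restrict (nth ys) {..<l}" by blast
      show "h \<in> ?P" unfolding ys(2) restrict_PiE_iff using ys(1) by blast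
    qed
  qed
  have "(\<Prod>s<l. \<Sum>y\<in>A. f s y) = (\<Sum>g\<in>?P. \<Prod>s<l. f s (g s))"
    using prod_sum_PiE[of "{..<l}" "\<lambda>_. A" f] assms by simp
  also have "\<dots> = (\<Sum>g\<in>?P. \<Prod>s<l. f s (map g [0..<l] ! s))"
    by (intro sum.cong prod.cong) auto
  also have "\<dots> = (\<Sum>ys\<in>?B. \<Prod>s<l. f s (ys!s))"
    using sum.reindex_bij_betw[OF bij, of "\<lambda>ys. \<Prod>s<l. f s (ys!s)"] .
  finally show ?thesis by simp
qed

lemma finite_blocks: "finite (blocks q n l)"
proof -
  have "blocks q n l \<subseteq> {xs. set xs \<subseteq> words q n \<and> length xs = l}"
    unfolding blocks_def by (auto simp: in_set_conv_nth)
  then show ?thesis using finite_lists_length_eq[OF finite_words] by (rule finite_subset)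
qed

lemma sum_W_l_blocks:
  assumes "xs \<in> blocks q n l"
  shows "(\<Sum>ys\<in>blocks q n l. W_l n l ys xs) = 1"
proof -
  have "(\<Sum>ys\<in>blocks q n l. W_l n l ys xs) = (\<Prod>s<l. \<Sum>y\<in>words q n. perm_channel n y (xs!s))"
    unfolding W_l_def blocks_def
    by (rule sum_lists_length_prod_nth[OF finite_words])
  also have "\<dots> = 1" using assms by (auto simp: blocks_def sum_perm_channel_words)
  finally show ?thesis .
qed

lemma W_l_nonneg: "W_l n l ys xs \<ge> 0"
  unfolding W_l_def by (auto intro!: prod_nonneg perm_channel_nonneg)

lemma W_l_cong_map_mset:
  assumes "xs \<in> blocks q n l" "xs' \<in> blocks q n l" "map mset xs = map mset xs'"
  shows "W_l n l ys xs = W_l n l ys xs'"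
proof -
  have "perm_channel n (ys!s) (xs!s) = perm_channel n (ys!s) (xs'!s)" if "s < l" for s
  proof (rule perm_channel_cong_mset)
    show "length (xs'!s) = n" using assms that by (auto simp: blocks_def words_def)
    have "length xs = l" "length xs' = l" using assms by (auto simp: blocks_def)
    then show "mset (xs!s) = mset (xs'!s)"
      using that nth_map[of s xs mset] nth_map[of s xs' mset] assms(3) by simp
  qed
  then show ?thesis unfolding W_l_def by (intro prod.cong) auto
qed

text \<open>The count of the last letter is forced, since the counts add up to \<open>n\<close>.\<close>

lemma mset_eq_if_counts_eq_words:
  assumes "q \<ge> 1" "x \<in> words q n" "x' \<in> words q n"
    and "map (count (mset x)) [1..<q] = map (count (mset x')) [1..<q]"
  shows "mset x = mset x'"
proof (rule multiset_eqI)
  fix k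
  have lo: "count (mset x) k = count (mset x') k" if "k \<in> {1..<q}" for k
  proof -
    have "map (count (mset x)) [1..<q] ! (k - 1) = map (count (mset x')) [1..<q] ! (k - 1)"
      by (rule arg_cong[OF assms(4)])
    then show ?thesis using that by auto
  qed
  have sx: "(\<Sum>k\<in>{1..q}. count_list x k) = n" "(\<Sum>k\<in>{1..q}. count_list x' k) = n"
    using assms(2,3) sum_count_set[of x "{1..q}"] sum_count_set[of x' "{1..q}"]
    by (auto simp: words_def)
  have ins: "{1..q} = insert q {1..<q}" using assms(1) by auto
  have "count_list x q + (\<Sum>k\<in>{1..<q}. count_list x k) = n"
    using sx(1) unfolding ins by simp
  moreover have "count_list x' q + (\<Sum>k\<in>{1..<q}. count_list x' k) = n"
    using sx(2) unfolding ins by simp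
  moreover have "(\<Sum>k\<in>{1..<q}. count_list x k) = (\<Sum>k\<in>{1..<q}. count_list x' k)"
    using lo by (intro sum.cong) (auto simp: count_mset)
  ultimately have hq: "count (mset x) q = count (mset x') q" by (simp add: count_mset)
  show "count (mset x) k = count (mset x') k"
  proof (cases "k \<in> {1..q}")
    case True
    then show ?thesis using lo hq by (cases "k = q") auto
  next
    case False
    then have "k \<notin> set x" "k \<notin> set x'" using assms(2,3) by (auto simp: words_def)
    then show ?thesis by (metis count_mset_0_iff)
  qed
qed

lemma card_mset_image_words:
  assumes "q \<ge> 1"
  shows "card (mset ` words q n) \<le> (n+1)^(q-1)"
proof -
  let ?g = "\<lambda>M. map (count M) [1..<q]"
  let ?L = "{xs. set xs \<subseteq> {0..n} \<and> length xs = q - 1}"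
  have inj: "inj_on ?g (mset ` words q n)"
    using mset_eq_if_counts_eq_words[OF assms] by (auto simp: inj_on_def)
  have sub: "?g ` mset ` words q n \<subseteq> ?L"
  proof
    fix v assume "v \<in> ?g ` mset ` words q n"
    then obtain x where x: "x \<in> words q n" "v = ?g (mset x)" by blast
    have "count (mset x) k \<le> n" for k
      using count_le_size[of "mset x" k] x(1) by (auto simp: words_def)
    then show "v \<in> ?L" using x(2) by auto
  qed
  have "card (mset ` words q n) = card (?g ` mset ` words q n)"
    using card_image[OF inj] by simp
  also have "\<dots> \<le> card ?L" by (rule card_mono[OF _ sub]) (simp add: finite_lists_length_eq)
  also have "\<dots> = (n+1)^(q-1)" by (simp add: card_lists_length_eq)
  finally show ?thesis .
qed

lemma card_map_mset_blocks:
  assumes "q \<ge> 1"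
  shows "card (map mset ` blocks q n l) \<le> (n+1)^(l*(q-1))"
proof -
  let ?S = "mset ` words q n"
  have sub: "map mset ` blocks q n l \<subseteq> {ms. set ms \<subseteq> ?S \<and> length ms = l}"
    by (auto simp: blocks_def in_set_conv_nth)
  have fS: "finite ?S" using finite_words by simp
  have "card (map mset ` blocks q n l) \<le> card {ms. set ms \<subseteq> ?S \<and> length ms = l}"
    by (rule card_mono[OF _ sub]) (simp add: finite_lists_length_eq[OF fS])
  also have "\<dots> = card ?S ^ l" by (simp add: card_lists_length_eq[OF fS])
  also have "\<dots> \<le> ((n+1)^(q-1))^l" by (rule power_mono[OF card_mset_image_words[OF assms]]) simp
  also have "\<dots> = (n+1)^(l*(q-1))" by (simp add: power_mult[symmetric] mult.commute)
  finally show ?thesis .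
qed

lemma card_multisets_size_le:
  assumes "finite T"
  shows "card {m. set_mset m \<subseteq> T \<and> size m \<le> K} \<le> 2 ^ (card T + 2 * K)"
proof -
  have eq: "{m. set_mset m \<subseteq> T \<and> size m \<le> K} = (\<Union>k\<in>{..K}. multisets_of_size T k)"
    by (auto simp: multisets_of_size_def)
  have "card {m. set_mset m \<subseteq> T \<and> size m \<le> K} \<le> (\<Sum>k\<le>K. card (multisets_of_size T k))"
    unfolding eq by (rule card_UN_le) simp
  also have "\<dots> \<le> (\<Sum>k\<le>K. 2 ^ (card T + K))"
  proof (rule sum_mono)
    fix k assume "k \<in> {..K}"
    then have "card (multisets_of_size T k) \<le> 2 ^ (card T + k - 1)"
      using card_multisets_of_size[OF assms, of k] binomial_le_pow2 by simp
    also have "\<dots> \<le> 2 ^ (card T + K)" using \<open>k \<in> {..K}\<close> by (intro power_increasing) auto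
    finally show "card (multisets_of_size T k) \<le> 2 ^ (card T + K)" .
  qed
  also have "\<dots> = (K + 1) * 2 ^ (card T + K)" by simp
  also have "\<dots> \<le> 2 ^ K * 2 ^ (card T + K)"
  proof -
    have "K + 1 \<le> 2 ^ K" by (induction K) auto
    then show ?thesis by (rule mult_right_mono) simp
  qed
  also have "\<dots> = 2 ^ (card T + 2 * K)" by (simp add: power_add[symmetric])
  finally show ?thesis .
qed

lemma abs_diff_less_one_if_floor_eq:
  fixes x y :: real
  assumes "\<lfloor>x\<rfloor> = \<lfloor>y\<rfloor>"
  shows "\<bar>x - y\<bar> < 1"
  using assms of_int_floor_le[of x] of_int_floor_le[of y]
    real_of_int_floor_add_one_gt[of x] real_of_int_floor_add_one_gt[of y]
  by linarith

text \<open>Pigeonhole on the roundings \<open>t \<mapsto> \<lfloor>K p(t)\<rfloor>\<close>, encoded as multisets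
  of size at most \<open>K\<close>.\<close>

lemma exists_close_pmfs:
  fixes P :: "nat \<Rightarrow> 'a pmf" and K :: nat
  assumes T: "finite T" and supp: "\<And>i. i < M \<Longrightarrow> set_pmf (P i) \<subseteq> T"
    and K: "K > 0" and M: "2 ^ (card T + 2 * K) < M"
  obtains i j where "i < M" "j < M" "i \<noteq> j"
    "\<And>t. \<bar>pmf (P i) t - pmf (P j) t\<bar> \<le> 1 / K"
proof -
  define v where "v i = (\<Sum>t\<in>T. replicate_mset (nat \<lfloor>K * pmf (P i) t\<rfloor>) t)" for i
  have count_v: "count (v i) t = (if t \<in> T then nat \<lfloor>K * pmf (P i) t\<rfloor> else 0)" for i t
    unfolding v_def count_sum by (simp add: count_replicate_mset T sum.delta')
  have size_v: "size (v i) \<le> K" if "i < M" for i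
  proof -
    have "real (size (v i)) = (\<Sum>t\<in>T. real (nat \<lfloor>K * pmf (P i) t\<rfloor>))"
      unfolding v_def by simp
    also have "\<dots> \<le> (\<Sum>t\<in>T. K * pmf (P i) t)"
      by (intro sum_mono) (simp add: pmf_nonneg)
    also have "\<dots> = K" using sum_pmf_eq_1[OF T supp[OF that]] by (simp add: sum_distrib_left[symmetric])
    finally show ?thesis by simp
  qed
  let ?S = "{m. set_mset m \<subseteq> T \<and> size m \<le> K}"
  have "set_mset (v i) \<subseteq> T" for i
  proof
    fix t assume "t \<in># v i"
    then show "t \<in> T" using count_v[of i t] by (auto simp: count_eq_zero_iff split: if_splits)
  qed
  then have "v ` {..<M} \<subseteq> ?S" using size_v by auto
  moreover have "finite ?S"
  proof -
    have "?S = (\<Union>k\<in>{..K}. multisets_of_size T k)" by (auto simp: multisets_of_size_def)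
    then show ?thesis using finite_multisets_of_size[OF T] by simp
  qed
  moreover have "card ?S < M"
    using card_multisets_size_le[OF T, of K] M by simp
  ultimately have "card (v ` {..<M}) < card {..<M}"
    using card_mono[of ?S "v ` {..<M}"] by simp
  then have "\<not> inj_on v {..<M}"
    using card_image by fastforce
  then obtain i j where ij: "i < M" "j < M" "i \<noteq> j" "v i = v j"
    unfolding inj_on_def by auto
  have "\<bar>pmf (P i) t - pmf (P j) t\<bar> \<le> 1 / K" for t
  proof (cases "t \<in> T")
    case True
    then have "\<lfloor>K * pmf (P i) t\<rfloor> = \<lfloor>K * pmf (P j) t\<rfloor>"
      using count_v[of i t] count_v[of j t] ij(4) by (simp add: nat_eq_iff2)
    then have "\<bar>K * pmf (P i) t - K * pmf (P j) t\<bar> < 1"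
      by (rule abs_diff_less_one_if_floor_eq)
    then have "K * \<bar>pmf (P i) t - pmf (P j) t\<bar> < 1"
      by (simp add: abs_mult right_diff_distrib[symmetric])
    then show ?thesis using K by (simp add: field_simps)
  next
    case False
    then have "pmf (P i) t = 0" "pmf (P j) t = 0"
      using supp ij(1,2) by (auto simp: pmf_eq_0_set_pmf)
    then show ?thesis by simp
  qed
  with ij(1-3) that show ?thesis by blast
qed

lemma expectation_pmf_finite:
  fixes f :: "'a \<Rightarrow> real"
  assumes "finite B" "set_pmf P \<subseteq> B"
  shows "measure_pmf.expectation P f = (\<Sum>x\<in>B. pmf P x * f x)"
  using integral_measure_pmf[OF assms(1), of P f] assms(2) by auto

lemma expectation_diff_le_card:
  fixes g :: "'a \<Rightarrow> real" and \<delta> :: real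
  assumes T: "finite T" and supp: "set_pmf P \<subseteq> T" "set_pmf P' \<subseteq> T"
    and g: "\<And>t. t \<in> T \<Longrightarrow> 0 \<le> g t \<and> g t \<le> 1"
    and close: "\<And>t. t \<in> T \<Longrightarrow> \<bar>pmf P t - pmf P' t\<bar> \<le> \<delta>"
  shows "measure_pmf.expectation P g - measure_pmf.expectation P' g \<le> card T * \<delta>"
proof -
  have "measure_pmf.expectation P g - measure_pmf.expectation P' g
      = (\<Sum>t\<in>T. (pmf P t - pmf P' t) * g t)"
    using expectation_pmf_finite[OF T] supp by (simp add: sum_subtractf left_diff_distrib)
  also have "\<dots> \<le> (\<Sum>t\<in>T. \<delta>)"
  proof (rule sum_mono)
    fix t assume t: "t \<in> T"
    have "(pmf P t - pmf P' t) * g t \<le> \<bar>pmf P t - pmf P' t\<bar> * g t"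
      using g[OF t] by (intro mult_right_mono) auto
    also have "\<dots> \<le> \<bar>pmf P t - pmf P' t\<bar>" using g[OF t] by (simp add: mult_left_le)
    finally show "(pmf P t - pmf P' t) * g t \<le> \<delta>" using close[OF t] by linarith
  qed
  finally show ?thesis by simp
qed

lemma err_miss_le_lambda1:
  assumes "i < M" shows "err_miss q n l Q D i \<le> lambda1 q n l M Q D"
proof -
  have "{err_miss q n l Q D i | i. i < M} = (\<lambda>i. err_miss q n l Q D i) ` {..<M}" by auto
  then have f: "finite (insert 0 {err_miss q n l Q D i | i. i < M})" by simp
  show ?thesis unfolding lambda1_def by (rule Max_ge[OF f]) (use assms in blast)
qed

lemma err_to_le_lambda2:
  assumes "i < M" "j < M" "i \<noteq> j" shows "err_to q n l Q D i j \<le> lambda2 q n l M Q D"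
proof -
  have "{err_to q n l Q D i j | i j. i < M \<and> j < M \<and> i \<noteq> j}
      \<subseteq> (\<lambda>(i,j). err_to q n l Q D i j) ` ({..<M} \<times> {..<M})" by auto
  then have "finite {err_to q n l Q D i j | i j. i < M \<and> j < M \<and> i \<noteq> j}"
    by (rule finite_subset) simp
  then have f: "finite (insert 0 {err_to q n l Q D i j | i j. i < M \<and> j < M \<and> i \<noteq> j})"
    by simp
  show ?thesis unfolding lambda2_def by (rule Max_ge[OF f]) (use assms in blast)
qed

lemma err_miss_eq_one_minus_err_to:
  assumes supp: "set_pmf (Q i) \<subseteq> blocks q n l" and D: "D i \<subseteq> blocks q n l"
  shows "err_miss q n l Q D i = 1 - err_to q n l Q D i i"
proof -
  let ?B = "blocks q n l" and ?h = "\<lambda>xs. \<Sum>ys\<in>D i. W_l n l ys xs"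
  have "err_miss q n l Q D i = (\<Sum>xs\<in>?B. pmf (Q i) xs * (\<Sum>ys\<in>?B - D i. W_l n l ys xs))"
    unfolding err_miss_def by (rule expectation_pmf_finite[OF finite_blocks supp])
  also have "\<dots> = (\<Sum>xs\<in>?B. pmf (Q i) xs * (1 - ?h xs))"
  proof (intro sum.cong refl)
    fix xs assume "xs \<in> ?B"
    then show "pmf (Q i) xs * (\<Sum>ys\<in>?B - D i. W_l n l ys xs) = pmf (Q i) xs * (1 - ?h xs)"
      by (simp add: sum_diff[OF finite_blocks D] sum_W_l_blocks)
  qed
  also have "\<dots> = (\<Sum>xs\<in>?B. pmf (Q i) xs) - (\<Sum>xs\<in>?B. pmf (Q i) xs * ?h xs)"
    by (simp add: right_diff_distrib sum_subtractf)
  also have "(\<Sum>xs\<in>?B. pmf (Q i) xs * ?h xs) = err_to q n l Q D i i"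
    unfolding err_to_def by (rule expectation_pmf_finite[OF finite_blocks supp, symmetric])
  finally show ?thesis by (simp add: sum_pmf_eq_1[OF finite_blocks supp])
qed

lemma err_to_eq_expectation_map_mset:
  assumes supp: "set_pmf (Q a) \<subseteq> blocks q n l"
  shows "err_to q n l Q D a i = measure_pmf.expectation (map_pmf (map mset) (Q a))
           (\<lambda>t. \<Sum>ys\<in>D i. W_l n l ys (inv_into (blocks q n l) (map mset) t))"
proof -
  let ?B = "blocks q n l"
  have W_l_eq: "W_l n l ys xs = W_l n l ys (inv_into ?B (map mset) (map mset xs))"
    if "xs \<in> ?B" for xs ys
  proof (rule W_l_cong_map_mset[where q = q])
    let ?x = "inv_into ?B (map mset) (map mset xs)"
    show "?x \<in> ?B" "map mset xs = map mset ?x"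
      using that by (auto intro: inv_into_into f_inv_into_f[symmetric])
  qed (rule that)
  show ?thesis
    unfolding err_to_def integral_map_pmf expectation_pmf_finite[OF finite_blocks supp]
    using W_l_eq by simp
qed

lemma lambda_sum_ge_of_many_messages:
  fixes K N :: nat
  assumes q: "q \<ge> 1" and code: "is_ID_code q n l M Q D" and K: "K > 0"
    and M: "2 ^ (N + 2 * K) < M" and N: "(n + 1) ^ (l * (q - 1)) \<le> N"
  shows "1 - real N / real K \<le> lambda1 q n l M Q D + lambda2 q n l M Q D"
proof -
  define B where "B = blocks q n l"
  define T where "T = map mset ` B"
  define P where "P a = map_pmf (map mset) (Q a)" for a
  have B: "finite B" unfolding B_def by (rule finite_blocks)
  have T: "finite T" "card T \<le> N" unfolding T_def B_def
    using finite_blocks card_map_mset_blocks[OF q, of n l] N by auto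
  have supp: "set_pmf (Q a) \<subseteq> B" "D a \<subseteq> B" if "a < M" for a
    using code that unfolding is_ID_code_def B_def by auto
  then have supp_P: "set_pmf (P a) \<subseteq> T" if "a < M" for a
    using that unfolding P_def T_def by auto
  have "(2::nat) ^ (card T + 2 * K) \<le> 2 ^ (N + 2 * K)"
    using T(2) by (intro power_increasing) auto
  with M have M_types: "2 ^ (card T + 2 * K) < M" by linarith
  obtain i j where ij: "i < M" "j < M" "i \<noteq> j"
    and close: "\<And>t. \<bar>pmf (P i) t - pmf (P j) t\<bar> \<le> 1 / K"
  proof (rule exists_close_pmfs[OF T(1) supp_P K M_types])
    fix i j assume "i < M" "j < M" "i \<noteq> j" "\<And>t. \<bar>pmf (P i) t - pmf (P j) t\<bar> \<le> 1 / K"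
    then show thesis by (rule that)
  qed
  define g where "g t = (\<Sum>ys\<in>D i. W_l n l ys (inv_into B (map mset) t))" for t
  have g: "0 \<le> g t \<and> g t \<le> 1" if "t \<in> T" for t
  proof -
    have x: "inv_into B (map mset) t \<in> B" using that unfolding T_def by (rule inv_into_into)
    have "g t \<le> (\<Sum>ys\<in>B. W_l n l ys (inv_into B (map mset) t))"
      unfolding g_def by (rule sum_mono2[OF B supp(2)[OF ij(1)]]) (simp add: W_l_nonneg)
    also have "\<dots> = 1" using sum_W_l_blocks x B_def by simp
    finally show ?thesis unfolding g_def by (auto intro: sum_nonneg W_l_nonneg)
  qed
  have err_to: "err_to q n l Q D a i = measure_pmf.expectation (P a) g" if "a < M" for a
    using supp(1)[OF that] unfolding P_def g_def B_def by (rule err_to_eq_expectation_map_mset)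
  have "measure_pmf.expectation (P i) g - measure_pmf.expectation (P j) g \<le> card T * (1 / K)"
    using expectation_diff_le_card[OF T(1) supp_P[OF ij(1)] supp_P[OF ij(2)] g close] .
  also have "\<dots> \<le> real N / real K" using T(2) by (simp add: divide_right_mono)
  finally have "measure_pmf.expectation (P i) g - measure_pmf.expectation (P j) g
      \<le> real N / real K" .
  moreover have "err_miss q n l Q D i = 1 - err_to q n l Q D i i"
    using supp[OF ij(1)] unfolding B_def by (rule err_miss_eq_one_minus_err_to)
  ultimately have "1 - real N / real K \<le> err_miss q n l Q D i + err_to q n l Q D j i"
    using err_to ij(1,2) by simp
  also have "\<dots> \<le> lambda1 q n l M Q D + lambda2 q n l M Q D"
    using err_miss_le_lambda1[OF ij(1)] err_to_le_lambda2[OF ij(2,1)] ij(3) by (intro add_mono) auto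
  finally show ?thesis .
qed

lemma Suc_power_le_exp_mult_power:
  fixes n e :: nat and c :: real
  assumes "n \<ge> 1" "real e \<le> c * real n"
  shows "real ((n + 1) ^ e) \<le> exp c * real n ^ e"
proof -
  have n: "real n > 0" using assms(1) by simp
  have "real ((n + 1) ^ e) = real n ^ e * (1 + 1 / real n) ^ e"
    using n by (simp add: power_mult_distrib[symmetric] field_simps)
  also have "(1 + 1 / real n) ^ e \<le> exp (1 / real n) ^ e"
    by (intro power_mono) (auto intro: exp_ge_add_one_self)
  also have "\<dots> = exp (real e / real n)" by (simp add: exp_of_nat_mult[symmetric])
  also have "\<dots> \<le> exp c" using assms(2) n by (simp add: field_simps)
  finally show ?thesis using n by (simp add: mult.commute mult_left_mono)
qed

text \<open>The choice \<open>K = \<lceil>N/\<epsilon>\<rceil> + 1\<close> gives \<open>N/K \<le> \<epsilon>\<close> and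
  \<open>N + 2K \<le> N(1 + 2/\<epsilon>) + 4\<close>, which is below \<open>R n^(l(q-1))\<close> by the choice of \<open>R\<close>.\<close>

lemma lambda_sum_ge_one_minus:
  fixes \<epsilon> \<beta> R :: real
  assumes q: "q \<ge> 1" and code: "is_ID_code q n l M Q D" and \<epsilon>: "\<epsilon> > 0"
    and n: "n \<ge> 1" and l: "real l \<le> \<beta> * real n"
    and R: "exp (\<beta> * real (q - 1)) * (1 + 2 / \<epsilon>) + 4 < R"
    and M: "2 powr (R * real n ^ (l * (q - 1))) \<le> real M"
  shows "1 - \<epsilon> \<le> lambda1 q n l M Q D + lambda2 q n l M Q D"
proof -
  define e where "e = l * (q - 1)"
  define N where "N = (n + 1) ^ e"
  define K where "K = nat \<lceil>real N / \<epsilon>\<rceil> + 1"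
  define x where "x = real n ^ e"
  have x: "x \<ge> 1" unfolding x_def using n by simp
  have K: "K > 0" "real N / \<epsilon> \<le> real K" "real K \<le> real N / \<epsilon> + 2"
    using \<epsilon> unfolding K_def by (auto intro: divide_nonneg_pos) linarith+
  have "real l * real (q - 1) \<le> \<beta> * real n * real (q - 1)"
    using l by (rule mult_right_mono) simp
  then have "real e \<le> \<beta> * real (q - 1) * real n"
    unfolding e_def by (simp add: mult_ac)
  then have N_le: "real N \<le> exp (\<beta> * real (q - 1)) * x"
    unfolding N_def x_def by (rule Suc_power_le_exp_mult_power[OF n])
  have "real (N + 2 * K) \<le> real N * (1 + 2 / \<epsilon>) + 4"
    using K(3) \<epsilon> by (simp add: field_simps)
  also have "\<dots> \<le> exp (\<beta> * real (q - 1)) * x * (1 + 2 / \<epsilon>) + 4 * x"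
    using N_le \<epsilon> x by (intro add_mono mult_right_mono) auto
  also have "\<dots> = (exp (\<beta> * real (q - 1)) * (1 + 2 / \<epsilon>) + 4) * x"
    by (simp add: algebra_simps)
  also have "\<dots> < R * x"
    using R x by (intro mult_strict_right_mono) auto
  finally have "2 powr real (N + 2 * K) < 2 powr (R * x)" by simp
  also have "\<dots> \<le> real M" using M unfolding x_def e_def .
  finally have "2 ^ (N + 2 * K) < M"
    by (simp add: powr_realpow[symmetric] of_nat_less_iff[symmetric, where 'a = real])
  then have "1 - real N / real K \<le> lambda1 q n l M Q D + lambda2 q n l M Q D"
    by (rule lambda_sum_ge_of_many_messages[OF q code K(1)]) (simp add: N_def e_def)
  moreover have "real N / real K \<le> \<epsilon>"
    using K \<epsilon> by (simp add: field_simps)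
  ultimately show ?thesis by linarith
qed

lemma Liminf_ereal_ge_if_eventually:
  fixes f :: "'a \<Rightarrow> real"
  assumes "\<And>\<epsilon>. \<epsilon> > 0 \<Longrightarrow> eventually (\<lambda>i. c - \<epsilon> \<le> f i) F"
  shows "ereal c \<le> Liminf F (\<lambda>i. ereal (f i))"
proof (subst le_Liminf_iff, intro allI impI)
  fix y :: ereal assume y: "y < ereal c"
  show "eventually (\<lambda>i. y < ereal (f i)) F"
  proof (cases y)
    case (real r)
    have r_less: "r < c" using y real by simp
    then have "eventually (\<lambda>i. c - (c - r) / 2 \<le> f i) F"
      by (intro assms) simp
    then have "eventually (\<lambda>i. r < f i) F"
      by (rule eventually_mono) (use r_less in \<open>simp add: field_simps\<close>)
    then show ?thesis using real by simp
  qed (use y in auto)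
qed

theorem theorem2:
  fixes q :: nat and n l M :: "nat \<Rightarrow> nat" and R :: "nat \<Rightarrow> real" and \<beta> :: real
    and Q :: "nat \<Rightarrow> nat \<Rightarrow> nat list list pmf" and D :: "nat \<Rightarrow> nat \<Rightarrow> nat list list set"
  assumes "q \<ge> 2"
    and "filterlim n at_top sequentially"
    and "filterlim R at_top sequentially"
    and "\<beta> > 0"
    and "\<And>i. l i > 0"
    and "\<And>i. real (l i) \<le> \<beta> * real (n i)"
    and "\<And>i. is_ID_code q (n i) (l i) (M i) (Q i) (D i)"
    and "\<And>i. real (M i) \<ge> 2 powr (R i * real (n i) ^ (l i * (q - 1)))"
  shows "Liminf sequentially
           (\<lambda>i. ereal (lambda1 q (n i) (l i) (M i) (Q i) (D i)
                      + lambda2 q (n i) (l i) (M i) (Q i) (D i))) \<ge> 1"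
proof -
  have "eventually (\<lambda>i. 1 - \<epsilon> \<le> lambda1 q (n i) (l i) (M i) (Q i) (D i)
                             + lambda2 q (n i) (l i) (M i) (Q i) (D i)) sequentially"
    if \<epsilon>: "\<epsilon> > 0" for \<epsilon> :: real
  proof -
    have "eventually (\<lambda>i. exp (\<beta> * real (q - 1)) * (1 + 2 / \<epsilon>) + 4 < R i) sequentially"
      using assms(3) by (rule eventually_compose_filterlim[OF eventually_gt_at_top])
    moreover have "eventually (\<lambda>i. 1 \<le> n i) sequentially"
      using assms(2) by (rule eventually_compose_filterlim[OF eventually_ge_at_top])
    ultimately show ?thesis
      by eventually_elim
        (use assms(1,6-8) \<epsilon> in \<open>auto intro!: lambda_sum_ge_one_minus[where \<beta> = \<beta>]\<close>)
  qed
  then have "ereal 1 \<le> Liminf sequentially (\<lambda>i. ereal (lambda1 q (n i) (l i) (M i) (Q i) (D i)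
                      + lambda2 q (n i) (l i) (M i) (Q i) (D i)))"
    by (rule Liminf_ereal_ge_if_eventually)
  then show ?thesis by (simp add: one_ereal_def)
qed

end
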